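(* Strong p-reflexivity fails in general: there exist a language $L$, an $L$-algebra $\mathfrak A$ with universe $A$, and elements $a,b,d\in A$ with $d\neq b$ such that $a:b\approx_{\mathfrak A}a:d$.
   Context: Let $L$ be a language of algebras: a set of function symbols, each with an arity in $\mathbb N$ (constants are 0-ary function symbols); $L$ may be empty. Fix a countably infinite set $X$ of variables; $T_{L,X}$ is the set of $L$-terms over $X$, and $X(s)$ denotes the set of variables occurring in a term $s$. For an $L$-algebra $\mathfrak A$ with universe $A$, every term $s$ induces a function $s^{\mathfrak A}$, evaluated at assignments of elements of $A$ to variables. An arrow of $\mathfrak A$ is a pair $(a,b)\in A\times A$, written $a\to b$. The generalizations of an arrow $a\to b$ in $\mathfrak A$ are the pairs of arbitrary terms $s\to t$ with $s,t\in T_{L,X}$ such that there is an assignment $\sigma$ of elements of $A$ to the variables in $X(s)\cup X(t)$ with $s^{\mathfrak A}(\sigma)=a$ and $t^{\mathfrak A}(\sigma)=b$; their set is denoted $\uparrow_{\mathfrak A}(a\to b)$. For $L$-algebras $\mathfrak A,\mathfrak B$, an arrow $a\to b$ of $\mathfrak A$ and an arrow $c\to d$ of $\mathfrak B$, set $(a\to b)\uparrow_{(\mathfrak A,\mathfrak B)}(c\to d):=\uparrow_{\mathfrak A}(a\to b)\cap\uparrow_{\mathfrak B}(c\to d)$. A pair of terms $s\to t$ is trivial in $(\mathfrak A,\mathfrak B)$ if it belongs to $\uparrow_{\mathfrak A}(e)$ for every arrow $e$ of $\mathfrak A$ and to $\uparrow_{\mathfrak B}(e')$ for every arrow $e'$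 of $\mathfrak B$. We write $a\to b\lesssim_{(\mathfrak A,\mathfrak B)}c\to d$ iff either (i) every element of $\uparrow_{\mathfrak A}(a\to b)\cup\uparrow_{\mathfrak B}(c\to d)$ is trivial in $(\mathfrak A,\mathfrak B)$, or (ii) $(a\to b)\uparrow_{(\mathfrak A,\mathfrak B)}(c\to d)$ contains an element not trivial in $(\mathfrak A,\mathfrak B)$ and, for every arrow $c'\to d'$ of $\mathfrak B$, the inclusion $(a\to b)\uparrow_{(\mathfrak A,\mathfrak B)}(c\to d)\subseteq(a\to b)\uparrow_{(\mathfrak A,\mathfrak B)}(c'\to d')$ implies equality of these two sets. Define $a\to b\approx_{(\mathfrak A,\mathfrak B)}c\to d$ iff $a\to b\lesssim_{(\mathfrak A,\mathfrak B)}c\to d$ and $c\to d\lesssim_{(\mathfrak B,\mathfrak A)}a\to b$. For $a,b\in A$ and $c,d\in B$, the similarity-based analogical proportion $a:b\approx_{(\mathfrak A,\mathfrak B)}c:d$ holds iff $a\to b\approx_{(\mathfrak A,\mathfrak B)}c\to d$ and $b\to a\approx_{(\mathfrak A,\mathfrak B)}d\to c$. We write $\approx_{\mathfrak A}$ for $\approx_{(\mathfrak A,\mathfrak A)}$. *)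

theory Defs
  imports Main
begin

datatype ('f, 'v) trm = Var 'v | Fn 'f "('f, 'v) trm list"

type_synonym 'f lang = "'f set \<times> ('f \<Rightarrow> nat)"

text \<open>An algebra: a universe together with an interpretation of the symbols
  (an n-ary symbol acts on argument lists of length n).\<close>
type_synonym ('f, 'u) alg = "'u set \<times> ('f \<Rightarrow> 'u list \<Rightarrow> 'u)"

inductive wf_trm :: "'f lang \<Rightarrow> ('f, 'v) trm \<Rightarrow> bool" for L where
  wf_var: "wf_trm L (Var x)"
| wf_fn: "\<lbrakk> f \<in> fst L; length ts = snd L f; \<forall>t\<in>set ts. wf_trm L t \<rbrakk>
          \<Longrightarrow> wf_trm L (Fn f ts)"

fun vars :: "('f, 'v) trm \<Rightarrow> 'v set" where
  "vars (Var x) = {x}"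
| "vars (Fn f ts) = (\<Union>t\<in>set ts. vars t)"

fun eval :: "('f \<Rightarrow> 'u list \<Rightarrow> 'u) \<Rightarrow> ('v \<Rightarrow> 'u) \<Rightarrow> ('f, 'v) trm \<Rightarrow> 'u" where
  "eval I \<sigma> (Var x) = \<sigma> x"
| "eval I \<sigma> (Fn f ts) = I f (map (eval I \<sigma>) ts)"

definition is_algebra :: "'f lang \<Rightarrow> ('f, 'u) alg \<Rightarrow> bool" where
  "is_algebra L \<A> \<longleftrightarrow>
     (\<forall>f\<in>fst L. \<forall>xs. length xs = snd L f \<and> set xs \<subseteq> fst \<A> \<longrightarrow> snd \<A> f xs \<in> fst \<A>)"

text \<open>Generalizations of the arrow a \<rightarrow> b in the algebra; variables are natural numbers
  (a fixed countably infinite set X).\<close>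
definition gen :: "'f lang \<Rightarrow> ('f, 'u) alg \<Rightarrow> 'u \<Rightarrow> 'u \<Rightarrow> (('f, nat) trm \<times> ('f, nat) trm) set" where
  "gen L \<A> a b = {(s, t). wf_trm L s \<and> wf_trm L t \<and>
      (\<exists>\<sigma>. (\<forall>x \<in> vars s \<union> vars t. \<sigma> x \<in> fst \<A>) \<and>
           eval (snd \<A>) \<sigma> s = a \<and> eval (snd \<A>) \<sigma> t = b)}"

definition gen2 :: "'f lang \<Rightarrow> ('f, 'u) alg \<Rightarrow> ('f, 'w) alg \<Rightarrow> 'u \<Rightarrow> 'u \<Rightarrow> 'w \<Rightarrow> 'w
                     \<Rightarrow> (('f, nat) trm \<times> ('f, nat) trm) set" where
  "gen2 L \<A> \<B> a b c d = gen L \<A> a b \<inter> gen L \<B> c d"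

definition trivial :: "'f lang \<Rightarrow> ('f, 'u) alg \<Rightarrow> ('f, 'w) alg
                        \<Rightarrow> ('f, nat) trm \<times> ('f, nat) trm \<Rightarrow> bool" where
  "trivial L \<A> \<B> st \<longleftrightarrow>
     (\<forall>a\<in>fst \<A>. \<forall>b\<in>fst \<A>. st \<in> gen L \<A> a b) \<and>
     (\<forall>c\<in>fst \<B>. \<forall>d\<in>fst \<B>. st \<in> gen L \<B> c d)"

definition lesssim :: "'f lang \<Rightarrow> ('f, 'u) alg \<Rightarrow> ('f, 'w) alg \<Rightarrow> 'u \<Rightarrow> 'u \<Rightarrow> 'w \<Rightarrow> 'w \<Rightarrow> bool" where
  "lesssim L \<A> \<B> a b c d \<longleftrightarrow>
     (\<forall>st \<in> gen L \<A> a b \<union> gen L \<B> c d. trivial L \<A> \<B> st) \<or>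
     ((\<exists>st \<in> gen2 L \<A> \<B> a b c d. \<not> trivial L \<A> \<B> st) \<and>
      (\<forall>c'\<in>fst \<B>. \<forall>d'\<in>fst \<B>.
          gen2 L \<A> \<B> a b c d \<subseteq> gen2 L \<A> \<B> a b c' d' \<longrightarrow>
          gen2 L \<A> \<B> a b c d = gen2 L \<A> \<B> a b c' d'))"

definition arrow_approx :: "'f lang \<Rightarrow> ('f, 'u) alg \<Rightarrow> ('f, 'w) alg \<Rightarrow> 'u \<Rightarrow> 'u \<Rightarrow> 'w \<Rightarrow> 'w \<Rightarrow> bool" where
  "arrow_approx L \<A> \<B> a b c d \<longleftrightarrow> lesssim L \<A> \<B> a b c d \<and> lesssim L \<B> \<A> c d a b"

definition analogy :: "'f lang \<Rightarrow> ('f, 'u) alg \<Rightarrow> ('f, 'w) alg \<Rightarrow> 'u \<Rightarrow> 'u \<Rightarrow> 'w \<Rightarrow> 'w \<Rightarrow> bool" where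
  "analogy L \<A> \<B> a b c d \<longleftrightarrow> arrow_approx L \<A> \<B> a b c d \<and> arrow_approx L \<A> \<B> b a d c"

end

theory Submission
  imports Defs
begin

text \<open>Over the empty language every term is a variable, so a generalization of an arrow
  \<open>a \<rightarrow> b\<close> with \<open>a \<noteq> b\<close> is a pair of distinct variables; such a pair generalizes every
  arrow of every algebra, i.e.\ it is trivial. Hence any two non-identity arrows satisfy
  clause (i) of \<open>\<lesssim>\<close>, and in a three-element algebra without operations
  \<open>a : b \<approx> a : d\<close> holds for pairwise distinct \<open>a, b, d\<close>.\<close>

lemma wf_trm_empty_lang_is_Var:
  assumes "fst L = {}" "wf_trm L s"
  shows "\<exists>x. s = Var x"
  using assms(2,1) by (induction rule: wf_trm.induct) auto

lemma distinct_Var_pair_in_gen: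
  assumes "x \<noteq> y" "a \<in> fst \<A>" "b \<in> fst \<A>"
  shows "(Var x, Var y) \<in> gen L \<A> a b"
  unfolding gen_def
  using assms by (auto intro!: wf_trm.wf_var exI[of _ "\<lambda>z. if z = x then a else b"])

lemma trivial_distinct_Var_pair:
  assumes "x \<noteq> y"
  shows "trivial L \<A> \<B> (Var x, Var y)"
  unfolding trivial_def by (simp add: distinct_Var_pair_in_gen[OF assms])

lemma gen_empty_lang_distinct:
  assumes "fst L = {}" "a \<noteq> b" "st \<in> gen L \<A> a b"
  shows "\<exists>x y. x \<noteq> y \<and> st = (Var x, Var y)"
proof -
  from assms(3) obtain s t \<sigma> where st: "st = (s, t)" "wf_trm L s" "wf_trm L t"
    and eval: "eval (snd \<A>) \<sigma> s = a" "eval (snd \<A>) \<sigma> t = b"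
    unfolding gen_def by auto
  obtain x y where "s = Var x" "t = Var y"
    using wf_trm_empty_lang_is_Var[OF assms(1)] st by metis
  with eval assms(2) st show ?thesis by auto
qed

lemma lesssim_empty_lang:
  assumes "fst L = {}" "a \<noteq> b" "c \<noteq> d"
  shows "lesssim L \<A> \<B> a b c d"
proof -
  have "trivial L \<A> \<B> st" if "st \<in> gen L \<A> a b \<union> gen L \<B> c d" for st
  proof -
    from that obtain x y where "x \<noteq> y" "st = (Var x, Var y)"
      using gen_empty_lang_distinct[OF assms(1,2)] gen_empty_lang_distinct[OF assms(1,3)]
      by blast
    then show ?thesis by (simp add: trivial_distinct_Var_pair)
  qed
  then show ?thesis
    unfolding lesssim_def by (intro disjI1 ballI)
qed

lemma analogy_empty_lang:
  assumes "fst L = {}" "a \<noteq> b" "c \<noteq> d"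
  shows "analogy L \<A> \<B> a b c d"
  unfolding analogy_def arrow_approx_def using assms by (auto intro: lesssim_empty_lang)

theorem theorem3:
  shows "\<exists>(L :: nat lang) (\<A> :: (nat, nat) alg) a b d.
           is_algebra L \<A> \<and> a \<in> fst \<A> \<and> b \<in> fst \<A> \<and> d \<in> fst \<A> \<and> d \<noteq> b \<and>
           analogy L \<A> \<A> a b a d"
proof (intro exI conjI)
  let ?L = "({}, \<lambda>_. 0) :: nat lang"
  let ?\<A> = "({0, 1, 2}, \<lambda>_ _. 0) :: (nat, nat) alg"
  show "is_algebra ?L ?\<A>"
    by (simp add: is_algebra_def)
  show "analogy ?L ?\<A> ?\<A> 0 1 0 2"
    by (rule analogy_empty_lang) simp_all
qed simp_all

end
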